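(* Let $\phi_{\mathrm p}$ be a Bregman kernel on $\mathbb R^n$ whose distance satisfies $d_{\mathrm p}(x,x')\ge\frac12\|x-x'\|^2$ (Euclidean norm), and $\phi_{\mathrm d}$ a Bregman kernel on $\mathbb R^m$ whose distance satisfies $d_{\mathrm d}(z,z')\ge\frac12\|z-z'\|_{\mathrm d}^2$ for a norm $\|\cdot\|_{\mathrm d}$. Let $A\in\mathbb R^{m\times n}$ with $\|A\|=\sup_{v\ne0}\|Av\|_{\mathrm d,*}/\|v\|$, where $\|\cdot\|_{\mathrm d,*}$ is the dual norm of $\|\cdot\|_{\mathrm d}$, and let $\sigma,\tau>0$ with $\sigma\tau\|A\|^2\le1$. Then the function \[\phi_{\mathrm{pd3o}}(x,y,z)=\frac1\tau\phi_{\mathrm p}(x)+\frac1\sigma\phi_{\mathrm d}(z)+\frac\tau2\|y\|^2-\langle y,x\rangle-\langle z,A(x-\tau y)\rangle\] (on $\operatorname{dom}\phi_{\mathrm p}\times\mathbb R^n\times\operatorname{dom}\phi_{\mathrm d}$) is convex; equivalently its Bregman distance \[d_{\mathrm{pd3o}}(x,y,z;x',y',z')=\tfrac1\tau d_{\mathrm p}(x,x')+\tfrac1\sigma d_{\mathrm d}(z,z')+\tfrac\tau2\|y-y'\|^2-\langle y-y',x-x'\rangle-\langle z-z',A(x-x')\rangle+\tau\langle z-z',A(y-y')\rangle\] is nonnegative.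
   Context: A Bregman kernel $\phi$ is convex with $\operatorname{int}(\operatorname{dom}\phi)\ne\emptyset$, continuous on $\operatorname{dom}\phi$ and continuously differentiable on $\operatorname{int}(\operatorname{dom}\phi)$; its distance is $d(x,y)=\phi(x)-\phi(y)-\langle\nabla\phi(y),x-y\rangle$ on $\operatorname{dom}\phi\times\operatorname{int}(\operatorname{dom}\phi)$. *)

theory Defs
  imports "HOL-Analysis.Analysis"
begin

definition bgrad :: "('a::euclidean_space \<Rightarrow> real) \<Rightarrow> 'a \<Rightarrow> 'a" where
  "bgrad f x = (THE g. (f has_derivative (\<lambda>h. g \<bullet> h)) (at x))"

definition bregman_kernel :: "'a::euclidean_space set \<Rightarrow> ('a \<Rightarrow> real) \<Rightarrow> bool" where
  "bregman_kernel D f \<longleftrightarrow>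
     convex D \<and> convex_on D f \<and> interior D \<noteq> {} \<and> continuous_on D f \<and>
     (\<forall>x\<in>interior D. f differentiable (at x)) \<and>
     continuous_on (interior D) (bgrad f)"

text \<open>Bregman distance d(x,y), meant for x in D and y in interior D.\<close>
definition bregman_dist :: "('a::euclidean_space \<Rightarrow> real) \<Rightarrow> 'a \<Rightarrow> 'a \<Rightarrow> real" where
  "bregman_dist f x y = f x - f y - bgrad f y \<bullet> (x - y)"

definition is_norm :: "('a::real_vector \<Rightarrow> real) \<Rightarrow> bool" where
  "is_norm N \<longleftrightarrow> (\<forall>x. N x \<ge> 0) \<and> (\<forall>x. N x = 0 \<longleftrightarrow> x = 0) \<and>
     (\<forall>c x. N (c *\<^sub>R x) = \<bar>c\<bar> * N x) \<and> (\<forall>x y. N (x + y) \<le> N x + N y)"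

definition dual_norm :: "('a::real_inner \<Rightarrow> real) \<Rightarrow> 'a \<Rightarrow> real" where
  "dual_norm N u = Sup {u \<bullet> z | z. N z \<le> 1}"

definition op_norm_d :: "(real^'m \<Rightarrow> real) \<Rightarrow> real^'n^'m \<Rightarrow> real" where
  "op_norm_d N A = Sup {dual_norm N (A *v v) / norm v | v. v \<noteq> 0}"

end

theory Submission
  imports Defs
begin

text \<open>Write \<open>u = x - x'\<close>, \<open>w = y - y'\<close>, \<open>v = z - z'\<close> and \<open>p = u - \<tau> w\<close>.
  The strong convexity of the two kernels bounds \<open>d\<^sub>p\<^sub>d\<^sub>3\<^sub>o\<close> from below by
  \<open>\<bar>p\<bar>\<^sup>2/(2\<tau>) + \<parallel>v\<parallel>\<^sub>d\<^sup>2/(2\<sigma>) - \<langle>v, A p\<rangle>\<close>, and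
  \<open>\<langle>v, A p\<rangle> \<le> \<parallel>v\<parallel>\<^sub>d \<parallel>A\<parallel> \<bar>p\<bar>\<close> together with \<open>\<sigma>\<tau>\<parallel>A\<parallel>\<^sup>2 \<le> 1\<close> makes this
  nonnegative by Young's inequality. Nonnegativity of \<open>d\<^sub>p\<^sub>d\<^sub>3\<^sub>o\<close> says that at every interior
  point the affine function built from the gradients of the kernels minorizes \<open>\<phi>\<^sub>p\<^sub>d\<^sub>3\<^sub>o\<close>;
  this gives convexity on the interior of the domain, and continuity extends it to the whole domain.\<close>

lemma is_norm_zero: "is_norm N \<Longrightarrow> N 0 = 0"
  by (simp add: is_norm_def)

lemma is_norm_pos: "is_norm N \<Longrightarrow> x \<noteq> 0 \<Longrightarrow> N x > 0"
  by (metis is_norm_def less_eq_real_def)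

lemma is_norm_convex_on:
  assumes N: "is_norm N"
  shows "convex_on UNIV N"
proof (rule convex_onI)
  fix t :: real and x y assume t: "0 < t" "t < 1"
  have "N ((1 - t) *\<^sub>R x + t *\<^sub>R y) \<le> N ((1 - t) *\<^sub>R x) + N (t *\<^sub>R y)"
    using N unfolding is_norm_def by blast
  also have "\<dots> = (1 - t) * N x + t * N y"
    using N t unfolding is_norm_def by simp
  finally show "N ((1 - t) *\<^sub>R x + t *\<^sub>R y) \<le> (1 - t) * N x + t * N y" .
qed simp

lemma is_norm_ge_const_mult_norm:
  fixes N :: "'a::euclidean_space \<Rightarrow> real"
  assumes N: "is_norm N"
  obtains c where "c > 0" "\<And>z. c * norm z \<le> N z"
proof -
  have "continuous_on (sphere 0 1) N"
    using convex_on_continuous[OF open_UNIV is_norm_convex_on[OF N]] continuous_on_subset by blast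
  then obtain z0 where z0: "z0 \<in> sphere 0 1" and min: "\<And>z. z \<in> sphere 0 1 \<Longrightarrow> N z0 \<le> N z"
    using continuous_attains_inf[OF compact_sphere]
    by (metis sphere_eq_empty zero_less_one not_less_iff_gr_or_eq)
  have "N z0 * norm z \<le> N z" for z
  proof (cases "z = 0")
    case False
    then have "N z0 \<le> N ((1 / norm z) *\<^sub>R z)" by (intro min) simp
    also have "\<dots> = N z / norm z" using N by (simp add: is_norm_def)
    finally show ?thesis using False by (simp add: field_simps)
  qed (simp add: is_norm_zero[OF N])
  moreover have "N z0 > 0" using z0 is_norm_pos[OF N] by (metis mem_sphere_0 norm_zero zero_neq_one)
  ultimately show thesis using that by blast
qed

lemma bounded_is_norm_unit_ball:
  fixes N :: "'a::euclidean_space \<Rightarrow> real"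
  assumes N: "is_norm N"
  shows "bounded {z. N z \<le> 1}"
proof -
  obtain c where c: "c > 0" "\<And>z. c * norm z \<le> N z"
    using is_norm_ge_const_mult_norm[OF N] by blast
  have "norm z \<le> 1 / c" if "N z \<le> 1" for z
    using c(2)[of z] that c(1) by (simp add: field_simps)
  then show ?thesis unfolding bounded_iff by blast
qed

lemma inner_le_on_is_norm_unit_ball:
  fixes N :: "'a::euclidean_space \<Rightarrow> real"
  assumes N: "is_norm N"
  obtains K where "K > 0" "\<And>u z. N z \<le> 1 \<Longrightarrow> u \<bullet> z \<le> K * norm u"
proof -
  obtain K where K: "K > 0" "\<And>z. N z \<le> 1 \<Longrightarrow> norm z \<le> K"
    using bounded_pos bounded_is_norm_unit_ball[OF N] by (metis mem_Collect_eq)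
  have "u \<bullet> z \<le> K * norm u" if "N z \<le> 1" for u z
  proof -
    have "u \<bullet> z \<le> norm u * norm z" by (rule Cauchy_Schwarz_ineq2[THEN abs_le_D1])
    also have "\<dots> \<le> norm u * K" using K(2)[OF that] by (simp add: mult_left_mono)
    finally show ?thesis by (simp add: mult.commute)
  qed
  then show thesis using that K(1) by blast
qed

lemma bdd_above_dual_norm_set:
  fixes N :: "'a::euclidean_space \<Rightarrow> real"
  assumes N: "is_norm N"
  shows "bdd_above {u \<bullet> z | z. N z \<le> 1}"
proof -
  obtain K where K: "K > 0" "\<And>u z. N z \<le> 1 \<Longrightarrow> u \<bullet> z \<le> K * norm u"
    using inner_le_on_is_norm_unit_ball[OF N] by blast
  show ?thesis by (rule bdd_aboveI[where M = "K * norm u"]) (use K(2) in blast)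
qed

lemma dual_norm_le_const_mult_norm:
  fixes N :: "'a::euclidean_space \<Rightarrow> real"
  assumes N: "is_norm N"
  obtains K where "K > 0" "\<And>u. dual_norm N u \<le> K * norm u"
proof -
  obtain K where K: "K > 0" "\<And>u z. N z \<le> 1 \<Longrightarrow> u \<bullet> z \<le> K * norm u"
    using inner_le_on_is_norm_unit_ball[OF N] by blast
  have "N 0 \<le> 1" using is_norm_zero[OF N] by simp
  then have "dual_norm N u \<le> K * norm u" for u
    unfolding dual_norm_def using K(2) by (intro cSup_least) blast+
  then show thesis using that K(1) by blast
qed

lemma inner_le_mult_dual_norm:
  fixes N :: "'a::euclidean_space \<Rightarrow> real"
  assumes N: "is_norm N"
  shows "v \<bullet> u \<le> N v * dual_norm N u"
proof (cases "v = 0")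
  case False
  then have Nv: "N v > 0" using is_norm_pos[OF N] by blast
  have "N ((1 / N v) *\<^sub>R v) \<le> 1" using N Nv by (simp add: is_norm_def)
  then have "u \<bullet> ((1 / N v) *\<^sub>R v) \<le> dual_norm N u"
    unfolding dual_norm_def by (intro cSup_upper[OF _ bdd_above_dual_norm_set[OF N]]) blast
  then show ?thesis using Nv by (simp add: inner_commute field_simps)
qed (simp add: is_norm_zero[OF N])

lemma dual_norm_le_op_norm_d:
  fixes N :: "real^'m \<Rightarrow> real" and A :: "real^'n^'m"
  assumes N: "is_norm N"
  shows "dual_norm N (A *v p) \<le> op_norm_d N A * norm p"
proof -
  obtain K where K: "K > 0" "\<And>u. dual_norm N u \<le> K * norm u"
    using dual_norm_le_const_mult_norm[OF N] by blast
  obtain B where B: "\<And>v. norm (A *v v) \<le> norm v * B"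
    using bounded_linear.bounded[OF matrix_vector_mul_bounded_linear] by blast
  have "dual_norm N (A *v v) / norm v \<le> K * B" if "v \<noteq> 0" for v
  proof -
    have "dual_norm N (A *v v) \<le> K * norm (A *v v)" by (rule K(2))
    also have "\<dots> \<le> K * (norm v * B)" using B[of v] K(1) by simp
    finally show ?thesis using that by (simp add: field_simps)
  qed
  then have bdd: "bdd_above {dual_norm N (A *v v) / norm v | v. v \<noteq> 0}"
    by (auto intro!: bdd_aboveI[where M = "K * B"])
  show ?thesis
  proof (cases "p = 0")
    case True
    then show ?thesis using K(2)[of 0] by simp
  next
    case False
    then have "dual_norm N (A *v p) / norm p \<le> op_norm_d N A"
      unfolding op_norm_d_def by (intro cSup_upper[OF _ bdd]) blast
    then show ?thesis using False by (simp add: field_simps)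
  qed
qed

lemma convex_on_if_subgradients:
  fixes F :: "'a::real_inner \<Rightarrow> real"
  assumes "convex S"
    and subgrad: "\<And>b. b \<in> S \<Longrightarrow> \<exists>g. \<forall>a\<in>S. F b + g \<bullet> (a - b) \<le> F a"
  shows "convex_on S F"
proof (rule convex_onI[OF _ \<open>convex S\<close>])
  fix t :: real and x y assume t: "0 < t" "t < 1" and xy: "x \<in> S" "y \<in> S"
  define c where "c = (1 - t) *\<^sub>R x + t *\<^sub>R y"
  have "c \<in> S" using \<open>convex S\<close> xy t by (simp add: c_def convex_alt)
  then obtain g where g: "\<And>a. a \<in> S \<Longrightarrow> F c + g \<bullet> (a - c) \<le> F a" using subgrad by blast
  have "F c = (1 - t) * (F c + g \<bullet> (x - c)) + t * (F c + g \<bullet> (y - c))"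
    by (simp add: c_def algebra_simps inner_diff_right inner_add_right)
  also have "\<dots> \<le> (1 - t) * F x + t * F y"
    using g xy t by (intro add_mono mult_left_mono) auto
  finally show "F c \<le> (1 - t) * F x + t * F y" .
qed

lemma convex_on_if_convex_on_interior:
  fixes F :: "'a::euclidean_space \<Rightarrow> real"
  assumes "convex D" "interior D \<noteq> {}" "continuous_on D F" "convex_on (interior D) F"
  shows "convex_on D F"
proof (rule convex_onI[OF _ \<open>convex D\<close>])
  fix t :: real and x y assume t: "0 < t" "t < 1" and xy: "x \<in> D" "y \<in> D"
  obtain e where e: "e \<in> interior D" using assms(2) by blast
  define shrink where "shrink q s = q - s *\<^sub>R (q - e)" for q :: 'a and s :: real
  have shrink_interior: "shrink q s \<in> interior D" if "q \<in> D" "s \<in> {0<..<1}" for q s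
    unfolding shrink_def using mem_interior_convex_shrink[OF assms(1) e that(1)] that(2) by auto
  have lim: "((\<lambda>s. F (shrink q s)) \<longlongrightarrow> F q) (at_right 0)" if "q \<in> D" for q
  proof -
    have "(shrink q \<longlongrightarrow> q) (at_right 0)"
      unfolding shrink_def by (auto intro!: tendsto_eq_intros)
    moreover have "\<forall>\<^sub>F s in at_right 0. shrink q s \<in> D"
      using eventually_at_right_real[of 0 1] shrink_interior[OF that] interior_subset
      by (auto elim!: eventually_mono)
    ultimately show ?thesis
      using continuous_on_tendsto_compose[OF assms(3) _ that] by blast
  qed
  define c where "c = (1 - t) *\<^sub>R x + t *\<^sub>R y"
  have "c \<in> D" using assms(1) xy t by (simp add: c_def convex_alt)
  have shrink_c: "shrink c s = (1 - t) *\<^sub>R shrink x s + t *\<^sub>R shrink y s" for s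
    by (simp add: shrink_def c_def algebra_simps)
  have "\<forall>\<^sub>F s in at_right 0. F (shrink c s) \<le> (1 - t) * F (shrink x s) + t * F (shrink y s)"
    using eventually_at_right_real[of 0 1]
  proof (rule eventually_mono)
    fix s :: real assume "s \<in> {0<..<1}"
    then show "F (shrink c s) \<le> (1 - t) * F (shrink x s) + t * F (shrink y s)"
      unfolding shrink_c using shrink_interior xy t
      by (intro convex_onD[OF assms(4)]) auto
  qed simp
  moreover have "((\<lambda>s. (1 - t) * F (shrink x s) + t * F (shrink y s))
      \<longlongrightarrow> (1 - t) * F x + t * F y) (at_right 0)"
    using lim xy by (intro tendsto_intros)
  ultimately show "F c \<le> (1 - t) * F x + t * F y"
    using tendsto_le[OF trivial_limit_at_right_real _ lim[OF \<open>c \<in> D\<close>]] by blast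
qed

lemma mult_le_sum_squares_div:
  fixes L M P \<sigma> \<tau> :: real
  assumes "\<sigma> > 0" "\<tau> > 0" "\<sigma> * \<tau> * L\<^sup>2 \<le> 1"
  shows "L * M * P \<le> P\<^sup>2 / (2 * \<tau>) + M\<^sup>2 / (2 * \<sigma>)"
proof -
  have "0 \<le> \<sigma> * (P - \<tau> * L * M)\<^sup>2 + \<tau> * M\<^sup>2 * (1 - \<sigma> * \<tau> * L\<^sup>2)"
    using assms by (intro add_nonneg_nonneg mult_nonneg_nonneg) auto
  also have "\<dots> = 2 * \<sigma> * \<tau> * (P\<^sup>2 / (2 * \<tau>) + M\<^sup>2 / (2 * \<sigma>) - L * M * P)"
    using assms by (simp add: field_simps power2_eq_square)
  finally show ?thesis using mult_pos_pos[OF assms(1,2)] by (simp add: zero_le_mult_iff)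
qed

definition pd3o_kernel ::
    "real \<Rightarrow> real \<Rightarrow> real^'n^'m \<Rightarrow> (real^'n \<Rightarrow> real) \<Rightarrow> (real^'m \<Rightarrow> real)
      \<Rightarrow> (real^'n) \<times> (real^'n) \<times> (real^'m) \<Rightarrow> real" where
  "pd3o_kernel \<sigma> \<tau> A phip phid = (\<lambda>(x, y, z). 1/\<tau> * phip x + 1/\<sigma> * phid z + \<tau>/2 * (norm y)\<^sup>2
      - y \<bullet> x - z \<bullet> (A *v (x - \<tau> *\<^sub>R y)))"

definition pd3o_dist ::
    "real \<Rightarrow> real \<Rightarrow> real^'n^'m \<Rightarrow> (real^'n \<Rightarrow> real) \<Rightarrow> (real^'m \<Rightarrow> real)
      \<Rightarrow> (real^'n) \<times> (real^'n) \<times> (real^'m) \<Rightarrow> (real^'n) \<times> (real^'n) \<times> (real^'m) \<Rightarrow> real" where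
  "pd3o_dist \<sigma> \<tau> A phip phid = (\<lambda>(x, y, z) (x', y', z').
      1/\<tau> * bregman_dist phip x x' + 1/\<sigma> * bregman_dist phid z z'
      + \<tau>/2 * (norm (y - y'))\<^sup>2 - (y - y') \<bullet> (x - x')
      - (z - z') \<bullet> (A *v (x - x')) + \<tau> * ((z - z') \<bullet> (A *v (y - y'))))"

lemma pd3o_dist_nonneg:
  fixes phip :: "real^'n \<Rightarrow> real" and phid :: "real^'m \<Rightarrow> real" and A :: "real^'n^'m"
  assumes Nd: "is_norm Nd" and pos: "\<sigma> > 0" "\<tau> > 0"
    and step: "\<sigma> * \<tau> * (op_norm_d Nd A)\<^sup>2 \<le> 1"
    and sp: "bregman_dist phip x x' \<ge> 1/2 * (norm (x - x'))\<^sup>2"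
    and sd: "bregman_dist phid z z' \<ge> 1/2 * (Nd (z - z'))\<^sup>2"
  shows "0 \<le> pd3o_dist \<sigma> \<tau> A phip phid (x, y, z) (x', y', z')"
proof -
  define p where "p = (x - x') - \<tau> *\<^sub>R (y - y')"
  define M where "M = Nd (z - z')"
  have M_nonneg: "M \<ge> 0" using Nd by (simp add: M_def is_norm_def)
  have "(norm p)\<^sup>2 = (norm (x - x'))\<^sup>2 - 2 * \<tau> * ((y - y') \<bullet> (x - x')) + \<tau>\<^sup>2 * (norm (y - y'))\<^sup>2"
    unfolding p_def power2_norm_eq_inner
    by (simp add: inner_diff_left inner_diff_right inner_commute algebra_simps power2_eq_square)
  then have "(norm p)\<^sup>2 / (2 * \<tau>) = 1/\<tau> * (1/2 * (norm (x - x'))\<^sup>2) + \<tau>/2 * (norm (y - y'))\<^sup>2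
          - (y - y') \<bullet> (x - x')"
    using pos by (simp add: field_simps power2_eq_square)
  also have "\<dots> \<le> 1/\<tau> * bregman_dist phip x x' + \<tau>/2 * (norm (y - y'))\<^sup>2 - (y - y') \<bullet> (x - x')"
    using mult_left_mono[OF sp, of "1/\<tau>"] pos by simp
  finally have primal: "(norm p)\<^sup>2 / (2 * \<tau>) \<le>
      1/\<tau> * bregman_dist phip x x' + \<tau>/2 * (norm (y - y'))\<^sup>2 - (y - y') \<bullet> (x - x')" .
  have dual: "M\<^sup>2 / (2 * \<sigma>) \<le> 1/\<sigma> * bregman_dist phid z z'"
    using mult_left_mono[OF sd, of "1/\<sigma>"] pos by (simp add: M_def)
  have "(z - z') \<bullet> (A *v p) \<le> M * dual_norm Nd (A *v p)"
    unfolding M_def by (rule inner_le_mult_dual_norm[OF Nd])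
  also have "\<dots> \<le> M * (op_norm_d Nd A * norm p)"
    using dual_norm_le_op_norm_d[OF Nd] M_nonneg by (rule mult_left_mono)
  also have "\<dots> \<le> (norm p)\<^sup>2 / (2 * \<tau>) + M\<^sup>2 / (2 * \<sigma>)"
    using mult_le_sum_squares_div[OF pos step] by (simp add: ac_simps)
  finally have "(z - z') \<bullet> (A *v p) \<le> (norm p)\<^sup>2 / (2 * \<tau>) + M\<^sup>2 / (2 * \<sigma>)" .
  moreover have "(z - z') \<bullet> (A *v p) = (z - z') \<bullet> (A *v (x - x')) - \<tau> * ((z - z') \<bullet> (A *v (y - y')))"
    by (simp add: p_def matrix_vector_mult_diff_distrib matrix_vector_mult_scaleR inner_diff_right)
  ultimately show ?thesis using primal dual by (simp add: pd3o_dist_def)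
qed

text \<open>The identity is purely algebraic: it holds for whatever vectors \<^const>\<open>bgrad\<close> returns.\<close>

lemma pd3o_kernel_linearization:
  fixes phip :: "real^'n \<Rightarrow> real" and phid :: "real^'m \<Rightarrow> real" and A :: "real^'n^'m"
  shows "pd3o_kernel \<sigma> \<tau> A phip phid (x, y, z) - pd3o_kernel \<sigma> \<tau> A phip phid (x', y', z')
      - ((1/\<tau>) *\<^sub>R bgrad phip x' - y' - z' v* A,
         \<tau> *\<^sub>R y' - x' + \<tau> *\<^sub>R (z' v* A),
         (1/\<sigma>) *\<^sub>R bgrad phid z' - A *v x' + \<tau> *\<^sub>R (A *v y')) \<bullet> ((x, y, z) - (x', y', z'))
    = pd3o_dist \<sigma> \<tau> A phip phid (x, y, z) (x', y', z')"
proof -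
  have transpose: "u \<bullet> (w v* A) = w \<bullet> (A *v u)" for u w
    by (metis dot_lmul_matrix inner_commute)
  show ?thesis
    unfolding pd3o_kernel_def pd3o_dist_def bregman_dist_def
    by (simp add: power2_norm_eq_inner inner_diff_left inner_diff_right inner_add_left
        inner_add_right matrix_vector_mult_diff_distrib matrix_vector_mult_scaleR
        inner_commute algebra_simps transpose)
qed

lemma continuous_on_pd3o_kernel:
  fixes phip :: "real^'n \<Rightarrow> real" and phid :: "real^'m \<Rightarrow> real" and A :: "real^'n^'m"
  assumes "continuous_on Dp phip" "continuous_on Dd phid"
  shows "continuous_on (Dp \<times> UNIV \<times> Dd) (pd3o_kernel \<sigma> \<tau> A phip phid)"
proof -
  have "continuous_on (Dp \<times> UNIV \<times> Dd) (\<lambda>w. phip (fst w))"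
    by (rule continuous_on_compose2[OF assms(1) continuous_on_fst]) auto
  moreover have "continuous_on (Dp \<times> UNIV \<times> Dd) (\<lambda>w. phid (snd (snd w)))"
    by (rule continuous_on_compose2[OF assms(2)
        continuous_on_snd[OF continuous_on_snd[OF continuous_on_id]]]) auto
  moreover have "continuous_on (Dp \<times> UNIV \<times> Dd) (\<lambda>w. A *v (fst w - \<tau> *\<^sub>R fst (snd w)))"
    by (intro bounded_linear.continuous_on[OF matrix_vector_mul_bounded_linear] continuous_intros)
  ultimately show ?thesis
    unfolding pd3o_kernel_def case_prod_beta by (intro continuous_intros)
qed

lemma convex_on_pd3o_kernel:
  fixes phip :: "real^'n \<Rightarrow> real" and phid :: "real^'m \<Rightarrow> real" and A :: "real^'n^'m"
  assumes kp: "bregman_kernel Dp phip" and kd: "bregman_kernel Dd phid"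
    and dist_nonneg: "\<And>x y z x' y' z'. x \<in> Dp \<Longrightarrow> z \<in> Dd \<Longrightarrow>
      x' \<in> interior Dp \<Longrightarrow> z' \<in> interior Dd \<Longrightarrow> 0 \<le> pd3o_dist \<sigma> \<tau> A phip phid (x, y, z) (x', y', z')"
  shows "convex_on (Dp \<times> UNIV \<times> Dd) (pd3o_kernel \<sigma> \<tau> A phip phid)"
proof (rule convex_on_if_convex_on_interior)
  let ?D = "Dp \<times> (UNIV :: (real^'n) set) \<times> Dd"
  have Dp: "convex Dp" "interior Dp \<noteq> {}" "continuous_on Dp phip"
    and Dd: "convex Dd" "interior Dd \<noteq> {}" "continuous_on Dd phid"
    using kp kd by (auto simp: bregman_kernel_def)
  then show "convex ?D" "interior ?D \<noteq> {}"
    by (auto simp: convex_Times interior_Times)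
  show "continuous_on ?D (pd3o_kernel \<sigma> \<tau> A phip phid)"
    using Dp Dd by (intro continuous_on_pd3o_kernel)
  show "convex_on (interior ?D) (pd3o_kernel \<sigma> \<tau> A phip phid)"
  proof (rule convex_on_if_subgradients)
    show "convex (interior ?D)"
      using Dp Dd by (intro convex_interior convex_Times convex_UNIV)
    fix b assume "b \<in> interior ?D"
    then obtain x' y' z' where b: "b = (x', y', z')" "x' \<in> interior Dp" "z' \<in> interior Dd"
      by (auto simp: interior_Times)
    define g where "g = ((1/\<tau>) *\<^sub>R bgrad phip x' - y' - z' v* A,
      \<tau> *\<^sub>R y' - x' + \<tau> *\<^sub>R (z' v* A), (1/\<sigma>) *\<^sub>R bgrad phid z' - A *v x' + \<tau> *\<^sub>R (A *v y'))"
    have "pd3o_kernel \<sigma> \<tau> A phip phid b + g \<bullet> (a - b) \<le> pd3o_kernel \<sigma> \<tau> A phip phid a"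
      if "a \<in> interior ?D" for a
    proof -
      have "a \<in> ?D" using that interior_subset by blast
      then obtain x y z where a: "a = (x, y, z)" "x \<in> Dp" "z \<in> Dd" by auto
      show ?thesis
        using pd3o_kernel_linearization[of \<sigma> \<tau> A phip phid x y z x' y' z']
          dist_nonneg[OF a(2,3) b(2,3), of y y']
        unfolding a(1) b(1) g_def by linarith
    qed
    then show "\<exists>g. \<forall>a \<in> interior ?D.
        pd3o_kernel \<sigma> \<tau> A phip phid b + g \<bullet> (a - b) \<le> pd3o_kernel \<sigma> \<tau> A phip phid a"
      by blast
  qed
qed

theorem mainTheorem7:
  fixes phip :: "real^'n \<Rightarrow> real" and Dp :: "(real^'n) set"
    and phid :: "real^'m \<Rightarrow> real" and Dd :: "(real^'m) set"
    and Nd :: "real^'m \<Rightarrow> real" and A :: "real^'n^'m"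
    and \<sigma> \<tau> :: real
  assumes kp: "bregman_kernel Dp phip"
    and kd: "bregman_kernel Dd phid"
    and nd: "is_norm Nd"
    and sp: "\<And>x x'. x \<in> Dp \<Longrightarrow> x' \<in> interior Dp \<Longrightarrow>
               bregman_dist phip x x' \<ge> 1/2 * (norm (x - x'))\<^sup>2"
    and sd: "\<And>z z'. z \<in> Dd \<Longrightarrow> z' \<in> interior Dd \<Longrightarrow>
               bregman_dist phid z z' \<ge> 1/2 * (Nd (z - z'))\<^sup>2"
    and pos: "\<sigma> > 0" "\<tau> > 0"
    and step: "\<sigma> * \<tau> * (op_norm_d Nd A)\<^sup>2 \<le> 1"
  shows "convex_on (Dp \<times> UNIV \<times> Dd)
           (\<lambda>(x, y, z). 1/\<tau> * phip x + 1/\<sigma> * phid z + \<tau>/2 * (norm y)\<^sup>2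
                        - y \<bullet> x - z \<bullet> (A *v (x - \<tau> *\<^sub>R y)))
       \<and> (\<forall>x y z x' y' z'. x \<in> Dp \<longrightarrow> z \<in> Dd \<longrightarrow> x' \<in> interior Dp \<longrightarrow> z' \<in> interior Dd \<longrightarrow>
            0 \<le> 1/\<tau> * bregman_dist phip x x' + 1/\<sigma> * bregman_dist phid z z'
                 + \<tau>/2 * (norm (y - y'))\<^sup>2 - (y - y') \<bullet> (x - x')
                 - (z - z') \<bullet> (A *v (x - x')) + \<tau> * ((z - z') \<bullet> (A *v (y - y'))))"
proof -
  have dist_nonneg: "0 \<le> pd3o_dist \<sigma> \<tau> A phip phid (x, y, z) (x', y', z')"
    if "x \<in> Dp" "z \<in> Dd" "x' \<in> interior Dp" "z' \<in> interior Dd" for x y z x' y' z'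
    using that by (intro pd3o_dist_nonneg[OF nd pos step] sp sd)
  have "convex_on (Dp \<times> UNIV \<times> Dd) (pd3o_kernel \<sigma> \<tau> A phip phid)"
    by (rule convex_on_pd3o_kernel[OF kp kd dist_nonneg])
  then show ?thesis
    using dist_nonneg unfolding pd3o_kernel_def pd3o_dist_def by auto
qed

end
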